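(* Let $m\ge 2$ and $n\ge 1$ be integers. Then either $\mu(n+m,m)=\mu(n+m,m-1)$, or $$\mu(n+m,m)\ge \mu(n,m)+\nu(m,m)=\mu(n,m)+\lceil m/2\rceil.$$
   Context: Let $\mathbb F_2=\{0,1\}$ be the field with two elements. For $u\in\mathbb F_2^n$, $|u|$ denotes the Hamming weight of $u$. A wiring on $n$ vertices is a matrix $W=(w_{i,j})\in M(n,n;\mathbb F_2)$ with $w_{i,i}=1$ for all $i$. The degree of vertex $j$ is the number of $1$s in the $j$th column of $W$, and $\deg(W)$ is the maximum degree over all vertices. For $c\in\mathbb F_2^n$, $M(W,c)=\max\{|Wx+c| : x\in\mathbb F_2^n\}$. For $n,m\ge1$, $A(n,m)$ is the set of wirings on $n$ vertices with $\deg(W)\le m$. Define $\mu(n,m)=\min\{M(W,0): W\in A(n,m)\}$ and $\nu(n,m)=\min\{M(W,c): W\in A(n,m),\ c\in\mathbb F_2^n\}$. *)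

theory Defs
  imports Complex_Main
begin

text \<open>We model F_2 by bool (False = 0, True = 1, addition = xor, i.e. (\<noteq>)).
  Matrices in M(n,n;F_2) are functions nat \<Rightarrow> nat \<Rightarrow> bool whose entries
  vanish outside {0..<n} x {0..<n}; vectors in F_2^n are functions nat \<Rightarrow> bool
  vanishing outside {0..<n}.\<close>

definition vecs :: "nat \<Rightarrow> (nat \<Rightarrow> bool) set" where
  "vecs n = {x. \<forall>i. n \<le> i \<longrightarrow> \<not> x i}"

definition mats :: "nat \<Rightarrow> (nat \<Rightarrow> nat \<Rightarrow> bool) set" where
  "mats n = {W. \<forall>i j. (n \<le> i \<or> n \<le> j) \<longrightarrow> \<not> W i j}"

definition hweight :: "nat \<Rightarrow> (nat \<Rightarrow> bool) \<Rightarrow> nat" where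
  "hweight n u = card {i. i < n \<and> u i}"

definition mulv :: "nat \<Rightarrow> (nat \<Rightarrow> nat \<Rightarrow> bool) \<Rightarrow> (nat \<Rightarrow> bool) \<Rightarrow> (nat \<Rightarrow> bool)" where
  "mulv n W x = (\<lambda>i. i < n \<and> odd (card {j. j < n \<and> W i j \<and> x j}))"

definition addv :: "(nat \<Rightarrow> bool) \<Rightarrow> (nat \<Rightarrow> bool) \<Rightarrow> (nat \<Rightarrow> bool)" where
  "addv u v = (\<lambda>i. u i \<noteq> v i)"

definition wiring :: "nat \<Rightarrow> (nat \<Rightarrow> nat \<Rightarrow> bool) \<Rightarrow> bool" where
  "wiring n W \<longleftrightarrow> W \<in> mats n \<and> (\<forall>i<n. W i i)"

definition vdeg :: "nat \<Rightarrow> (nat \<Rightarrow> nat \<Rightarrow> bool) \<Rightarrow> nat \<Rightarrow> nat" where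
  "vdeg n W j = card {i. i < n \<and> W i j}"

definition wdeg :: "nat \<Rightarrow> (nat \<Rightarrow> nat \<Rightarrow> bool) \<Rightarrow> nat" where
  "wdeg n W = Max ((vdeg n W) ` {0..<n})"

definition MW :: "nat \<Rightarrow> (nat \<Rightarrow> nat \<Rightarrow> bool) \<Rightarrow> (nat \<Rightarrow> bool) \<Rightarrow> nat" where
  "MW n W c = Max {hweight n (addv (mulv n W x) c) | x. x \<in> vecs n}"

definition Aset :: "nat \<Rightarrow> nat \<Rightarrow> (nat \<Rightarrow> nat \<Rightarrow> bool) set" where
  "Aset n m = {W. wiring n W \<and> wdeg n W \<le> m}"

definition mu :: "nat \<Rightarrow> nat \<Rightarrow> nat" where
  "mu n m = Min {MW n W (\<lambda>_. False) | W. W \<in> Aset n m}"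

definition nu :: "nat \<Rightarrow> nat \<Rightarrow> nat" where
  "nu n m = Min {MW n W c | W c. W \<in> Aset n m \<and> c \<in> vecs n}"

end

theory Submission
  imports Defs
begin

text \<open>Take an optimal wiring \<open>W\<close> of degree at most \<open>m\<close> on \<open>n + m\<close> vertices. If
  \<open>\<mu>(n + m, m) \<noteq> \<mu>(n + m, m - 1)\<close>, then \<open>W\<close> has a column \<open>j\<close> of degree exactly \<open>m\<close>; let \<open>S\<close>
  be its support and \<open>T\<close> the remaining \<open>n\<close> vertices. The principal submatrix of \<open>W\<close> on
  \<open>T\<close> is a wiring of degree at most \<open>m\<close>, so some \<open>x\<close> supported on \<open>T\<close> makes \<open>W x\<close> have at
  least \<open>\<mu>(n, m)\<close> ones on \<open>T\<close>. Toggling \<open>x\<^sub>j\<close> complements \<open>W x\<close> on \<open>S\<close> and fixes it on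
  \<open>T\<close>, so one of the two choices has at least \<open>\<lceil>m/2\<rceil>\<close> ones on \<open>S\<close>. Finally
  \<open>\<nu>(m, m) = \<lceil>m/2\<rceil>\<close>: averaging over all \<open>x\<close> gives the lower bound, since every coordinate
  of \<open>W x + c\<close> is balanced, and the all-ones wiring attains it.\<close>

lemma finite_vecs: "finite (vecs n)"
proof (rule finite_subset)
  show "vecs n \<subseteq> (\<lambda>S i. i \<in> S) ` Pow {..<n}"
  proof
    fix x assume "x \<in> vecs n"
    then have "x = (\<lambda>i. i \<in> {i. i < n \<and> x i})" by (auto simp: vecs_def not_le[symmetric])
    then show "x \<in> (\<lambda>S i. i \<in> S) ` Pow {..<n}" by blast
  qed
qed simp

lemma zero_in_vecs: "(\<lambda>_. False) \<in> vecs n"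
  by (simp add: vecs_def)

lemma hweight_le: "hweight n u \<le> n"
  unfolding hweight_def using card_mono[of "{..<n}" "{i. i < n \<and> u i}"] by auto

lemma hweight_eq_sum: "hweight n u = (\<Sum>i<n. of_bool (u i))"
  by (simp add: hweight_def Int_def conj_commute)

lemma addv_False [simp]: "addv u (\<lambda>_. False) = u"
  by (simp add: addv_def)

lemma finite_MW_range: "finite {hweight n (addv (mulv n W x) c) | x. x \<in> vecs n}"
  by (rule finite_subset[of _ "{0..n}"]) (auto simp: hweight_le)

lemma MW_ge: "x \<in> vecs n \<Longrightarrow> hweight n (addv (mulv n W x) c) \<le> MW n W c"
  unfolding MW_def by (rule Max_ge[OF finite_MW_range]) blast

lemma MW_attained: "\<exists>x \<in> vecs n. MW n W c = hweight n (addv (mulv n W x) c)"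
proof -
  have "MW n W c \<in> {hweight n (addv (mulv n W x) c) | x. x \<in> vecs n}"
    unfolding MW_def by (rule Max_in[OF finite_MW_range]) (use zero_in_vecs in blast)
  then show ?thesis by blast
qed

lemma MW_le: "MW n W c \<le> n"
  using MW_attained[of n W c] hweight_le by auto

lemma wdeg_le_iff: "n \<ge> 1 \<Longrightarrow> wdeg n W \<le> k \<longleftrightarrow> (\<forall>j<n. vdeg n W j \<le> k)"
  unfolding wdeg_def by (subst Max_le_iff) auto

lemma Aset_iff:
  "n \<ge> 1 \<Longrightarrow> W \<in> Aset n m \<longleftrightarrow> W \<in> mats n \<and> (\<forall>i<n. W i i) \<and> (\<forall>j<n. vdeg n W j \<le> m)"
  by (simp add: Aset_def wiring_def wdeg_le_iff)

lemma Aset_mono: "k \<le> m \<Longrightarrow> Aset n k \<subseteq> Aset n m"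
  by (auto simp: Aset_def)

lemma identity_in_Aset:
  assumes "n \<ge> 1" "m \<ge> 1"
  shows "(\<lambda>i j. i < n \<and> i = j) \<in> Aset n m"
proof -
  have "{i. i < n \<and> i < n \<and> i = j} = {j}" if "j < n" for j
    using that by auto
  then show ?thesis
    using assms by (auto simp: Aset_iff mats_def vdeg_def)
qed

lemma finite_mu_range: "finite {MW n W (\<lambda>_. False) | W. W \<in> Aset n m}"
  by (rule finite_subset[of _ "{0..n}"]) (auto simp: MW_le)

lemma mu_le: "W \<in> Aset n m \<Longrightarrow> mu n m \<le> MW n W (\<lambda>_. False)"
  unfolding mu_def by (rule Min_le[OF finite_mu_range]) blast

lemma mu_attained:
  assumes "n \<ge> 1" "m \<ge> 1"
  shows "\<exists>W \<in> Aset n m. mu n m = MW n W (\<lambda>_. False)"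
proof -
  have "mu n m \<in> {MW n W (\<lambda>_. False) | W. W \<in> Aset n m}"
    unfolding mu_def by (rule Min_in[OF finite_mu_range]) (use identity_in_Aset[OF assms] in blast)
  then show ?thesis by blast
qed

lemma mu_antimono:
  assumes "n \<ge> 1" "1 \<le> k" "k \<le> m"
  shows "mu n m \<le> mu n k"
proof -
  obtain W where "W \<in> Aset n k" "mu n k = MW n W (\<lambda>_. False)"
    using mu_attained assms by blast
  then show ?thesis
    using mu_le Aset_mono[OF assms(3)] by fastforce
qed

lemma odd_card_toggle:
  assumes "finite B"
  shows "odd (card (if a \<in> B then B - {a} else insert a B)) \<longleftrightarrow> \<not> odd (card B)"
proof (cases "a \<in> B")
  case True
  then have "card B = Suc (card (B - {a}))"
    using assms by (simp only: card_Suc_Diff1)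
  then show ?thesis using True by simp
next
  case False
  then show ?thesis using assms by simp
qed

lemma mulv_flip:
  assumes "i < n"
  shows "mulv n W (x(i := \<not> x i)) k \<longleftrightarrow> mulv n W x k \<noteq> (k < n \<and> W k i)"
proof -
  define B where "B = {j. j < n \<and> W k j \<and> x j}"
  have "finite B" by (simp add: B_def)
  have "{j. j < n \<and> W k j \<and> (x(i := \<not> x i)) j} =
      (if W k i then (if i \<in> B then B - {i} else insert i B) else B)"
    using assms by (auto simp: B_def)
  moreover have "mulv n W x k \<longleftrightarrow> k < n \<and> odd (card B)"
    by (simp add: mulv_def B_def)
  ultimately show ?thesis
    using odd_card_toggle[OF \<open>finite B\<close>, of i] unfolding mulv_def by auto
qed

lemma card_vecs_coordinate_half:
  assumes "wiring m W" and "i < m"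
  shows "2 * card {x \<in> vecs m. addv (mulv m W x) c i} = card (vecs m)"
proof -
  let ?A = "{x \<in> vecs m. addv (mulv m W x) c i}"
  define flip where "flip x = x(i := \<not> x i)" for x :: "nat \<Rightarrow> bool"
  have "W i i" using assms by (simp add: wiring_def)
  then have "addv (mulv m W (flip x)) c i \<longleftrightarrow> \<not> addv (mulv m W x) c i" for x
    using mulv_flip[OF \<open>i < m\<close>, of W x i] \<open>i < m\<close> by (auto simp: flip_def addv_def)
  moreover have "flip x \<in> vecs m \<longleftrightarrow> x \<in> vecs m" for x
    using \<open>i < m\<close> by (auto simp: flip_def vecs_def)
  moreover have "flip (flip x) = x" for x by (simp add: flip_def)
  ultimately have "bij_betw flip ?A (vecs m - ?A)"
    by (intro bij_betw_byWitness[where f' = flip]) auto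
  then have "card ?A = card (vecs m - ?A)" by (rule bij_betw_same_card)
  moreover have "card (vecs m) = card ?A + card (vecs m - ?A)"
    using finite_vecs[of m] by (simp add: card_Diff_subset card_mono)
  ultimately show ?thesis by simp
qed

lemma sum_hweight_wiring:
  assumes "wiring m W"
  shows "2 * (\<Sum>x\<in>vecs m. hweight m (addv (mulv m W x) c)) = m * card (vecs m)"
proof -
  let ?F = "\<lambda>x. addv (mulv m W x) c"
  have "(\<Sum>x\<in>vecs m. hweight m (?F x)) = (\<Sum>x\<in>vecs m. \<Sum>i<m. of_bool (?F x i))"
    by (simp only: hweight_eq_sum)
  also have "\<dots> = (\<Sum>i<m. \<Sum>x\<in>vecs m. of_bool (?F x i))"
    by (rule sum.swap)
  also have "\<dots> = (\<Sum>i<m. card {x \<in> vecs m. ?F x i})"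
    using finite_vecs by (simp add: Int_def)
  finally have "2 * (\<Sum>x\<in>vecs m. hweight m (?F x)) = (\<Sum>i<m. 2 * card {x \<in> vecs m. ?F x i})"
    by (simp add: sum_distrib_left)
  also have "\<dots> = m * card (vecs m)"
    using card_vecs_coordinate_half[OF assms] by simp
  finally show ?thesis .
qed

lemma wiring_weight_ge_half:
  assumes "wiring m W"
  shows "\<exists>x\<in>vecs m. m - m div 2 \<le> hweight m (addv (mulv m W x) c)"
proof (rule ccontr)
  let ?h = "\<lambda>x. hweight m (addv (mulv m W x) c)"
  assume "\<not> ?thesis"
  then have "?h x + 1 \<le> m - m div 2" if "x \<in> vecs m" for x
    using that by force
  then have "(\<Sum>x\<in>vecs m. ?h x + 1) \<le> (\<Sum>x\<in>vecs m. m - m div 2)"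
    by (rule sum_mono)
  then have "2 * (\<Sum>x\<in>vecs m. ?h x) + 2 * card (vecs m) \<le> card (vecs m) * (2 * (m - m div 2))"
    by (simp add: sum_Suc)
  also have "\<dots> \<le> card (vecs m) * (m + 1)"
    by (intro mult_le_mono2) linarith
  finally have "card (vecs m) = 0"
    using sum_hweight_wiring[OF assms, of c] by (simp add: algebra_simps)
  then show False
    using finite_vecs[of m] zero_in_vecs[of m] by (auto simp: card_eq_0_iff)
qed

lemma finite_nu_range: "finite {MW n W c | W c. W \<in> Aset n m \<and> c \<in> vecs n}"
  by (rule finite_subset[of _ "{0..n}"]) (auto simp: MW_le)

lemma nu_ge_half:
  assumes "n \<ge> 1" "m \<ge> 1"
  shows "n - n div 2 \<le> nu n m"
proof -
  have "nu n m \<in> {MW n W c | W c. W \<in> Aset n m \<and> c \<in> vecs n}"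
    unfolding nu_def
    by (rule Min_in[OF finite_nu_range]) (use identity_in_Aset[OF assms] zero_in_vecs in blast)
  then obtain W c where "nu n m = MW n W c" "wiring n W"
    by (auto simp: Aset_def)
  then show ?thesis
    using wiring_weight_ge_half[of n W c] MW_ge[of _ n W c] by fastforce
qed

text \<open>The all-ones wiring with offset the indicator of the first half: every \<open>W x + c\<close> is
  that indicator or its complement.\<close>

lemma nu_le_half:
  assumes "n \<ge> 1" "n \<le> m"
  shows "nu n m \<le> n - n div 2"
proof -
  define W where "W = (\<lambda>i j. i < n \<and> j < n)"
  define c where "c = (\<lambda>i::nat. i < n div 2)"
  have "vdeg n W j \<le> m" for j
  proof -
    have "vdeg n W j \<le> card {..<n}"
      unfolding vdeg_def by (rule card_mono) auto
    then show ?thesis using assms(2) by simp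
  qed
  then have W: "W \<in> Aset n m"
    using assms(1) by (auto simp: Aset_iff mats_def W_def)
  have c: "c \<in> vecs n"
    using div_le_dividend[of n 2] by (auto simp: c_def vecs_def)
  have "nu n m \<le> MW n W c"
    unfolding nu_def by (rule Min_le[OF finite_nu_range]) (use W c in blast)
  also have "MW n W c \<le> n - n div 2"
  proof -
    obtain x where MW_x: "MW n W c = hweight n (addv (mulv n W x) c)"
      using MW_attained by blast
    have "{i. i < n \<and> addv (mulv n W x) c i} =
        (if odd (card {j. j < n \<and> x j}) then {n div 2..<n} else {..<n div 2})"
      by (auto simp: addv_def mulv_def W_def c_def)
    then have "hweight n (addv (mulv n W x) c) =
        (if odd (card {j. j < n \<and> x j}) then n - n div 2 else n div 2)"
      by (simp add: hweight_def)
    moreover have "n div 2 \<le> n - n div 2" by presburger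
    ultimately show ?thesis
      unfolding MW_x by (cases "odd (card {j. j < n \<and> x j})") simp_all
  qed
  finally show ?thesis .
qed

lemma nu_eq_half: "1 \<le> n \<Longrightarrow> n \<le> m \<Longrightarrow> nu n m = n - n div 2"
  using nu_ge_half nu_le_half by (simp add: le_antisym)

lemma ceiling_half: "\<lceil>real m / 2\<rceil> = int (m - m div 2)"
proof (cases "even m")
  case True
  then show ?thesis by (auto elim: evenE)
next
  case False
  then obtain k where "m = 2 * k + 1" using oddE by blast
  moreover have "\<lceil>1 / 2 + real k\<rceil> = 1 + int k" by (simp add: ceiling_unique)
  ultimately show ?thesis by (simp add: add_divide_distrib)
qed

definition submatrix :: "nat \<Rightarrow> (nat \<Rightarrow> nat) \<Rightarrow> (nat \<Rightarrow> nat \<Rightarrow> bool) \<Rightarrow> (nat \<Rightarrow> nat \<Rightarrow> bool)" where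
  "submatrix n f W = (\<lambda>i k. i < n \<and> k < n \<and> W (f i) (f k))"

definition spread :: "nat \<Rightarrow> (nat \<Rightarrow> nat) \<Rightarrow> (nat \<Rightarrow> bool) \<Rightarrow> (nat \<Rightarrow> bool)" where
  "spread n f x = (\<lambda>q. \<exists>k<n. f k = q \<and> x k)"

context
  fixes n N :: nat and f :: "nat \<Rightarrow> nat"
  assumes inj: "inj_on f {..<n}" and range: "f ` {..<n} \<subseteq> {..<N}"
begin

lemma submatrix_in_Aset:
  assumes "W \<in> Aset N m" "n \<ge> 1"
  shows "submatrix n f W \<in> Aset n m"
proof -
  have "f 0 < N" using range assms(2) by (auto simp: image_subset_iff)
  then have "N \<ge> 1" by simp
  have "vdeg n (submatrix n f W) k \<le> m" if "k < n" for k
  proof -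
    have "vdeg n (submatrix n f W) k = card {i. i < n \<and> W (f i) (f k)}"
      using that by (simp add: vdeg_def submatrix_def)
    also have "\<dots> = card (f ` {i. i < n \<and> W (f i) (f k)})"
      by (intro card_image[symmetric] inj_on_subset[OF inj]) auto
    also have "\<dots> \<le> vdeg N W (f k)"
      unfolding vdeg_def using range by (intro card_mono) auto
    also have "\<dots> \<le> m"
      using assms(1) \<open>N \<ge> 1\<close> range that by (auto simp: Aset_iff)
    finally show ?thesis .
  qed
  moreover have "W (f i) (f i)" if "i < n" for i
    using assms(1) \<open>N \<ge> 1\<close> range that by (auto simp: Aset_iff)
  ultimately show ?thesis
    using assms(2) by (auto simp: Aset_iff mats_def submatrix_def)
qed

lemma spread_in_vecs: "spread n f x \<in> vecs N"
  using range by (auto simp: spread_def vecs_def)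

lemma mulv_submatrix:
  assumes "i < n"
  shows "mulv n (submatrix n f W) x i = mulv N W (spread n f x) (f i)"
proof -
  have "{q. q < N \<and> W (f i) q \<and> spread n f x q} = f ` {k. k < n \<and> submatrix n f W i k \<and> x k}"
    using range assms by (auto simp: spread_def submatrix_def)
  moreover have "card (f ` {k. k < n \<and> submatrix n f W i k \<and> x k}) =
      card {k. k < n \<and> submatrix n f W i k \<and> x k}"
    by (intro card_image inj_on_subset[OF inj]) auto
  ultimately show ?thesis
    using range assms by (auto simp: mulv_def)
qed

lemma hweight_mulv_submatrix:
  "hweight n (mulv n (submatrix n f W) x) = card {p \<in> f ` {..<n}. mulv N W (spread n f x) p}"
proof -
  have "{p \<in> f ` {..<n}. mulv N W (spread n f x) p} = f ` {i. i < n \<and> mulv n (submatrix n f W) x i}"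
    by (auto simp: mulv_submatrix)
  moreover have "card (f ` {i. i < n \<and> mulv n (submatrix n f W) x i}) =
      card {i. i < n \<and> mulv n (submatrix n f W) x i}"
    by (intro card_image inj_on_subset[OF inj]) auto
  ultimately show ?thesis by (simp add: hweight_def)
qed

end

lemma mu_le_weight_on_subset:
  assumes "W \<in> Aset N m" "T \<subseteq> {..<N}" "card T = n" "n \<ge> 1"
  shows "\<exists>x\<in>vecs N. mu n m \<le> card {p \<in> T. mulv N W x p}"
proof -
  have "finite T" using assms(2) finite_subset by blast
  then obtain f where f: "bij_betw f {..<n} T"
    using ex_bij_betw_nat_finite[of T] assms(3) by (auto simp: atLeast0LessThan)
  then have inj: "inj_on f {..<n}" and image: "f ` {..<n} = T"
    by (auto simp: bij_betw_def)
  have range: "f ` {..<n} \<subseteq> {..<N}" using image assms(2) by simp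
  obtain x where "mu n m \<le> hweight n (mulv n (submatrix n f W) x)"
    using mu_le[OF submatrix_in_Aset[OF inj range assms(1,4)]]
      MW_attained[of n "submatrix n f W" "\<lambda>_. False"] by auto
  then show ?thesis
    using hweight_mulv_submatrix[OF inj range] spread_in_vecs[OF inj range] image
    by (intro bexI[of _ "spread n f x"]) auto
qed

lemma hweight_split:
  assumes "S \<subseteq> {..<N}"
  shows "hweight N u = card {p \<in> {..<N} - S. u p} + card {p \<in> S. u p}"
proof -
  have "{i. i < N \<and> u i} = {p \<in> {..<N} - S. u p} \<union> {p \<in> S. u p}"
    using assms by auto
  moreover have "finite S" using assms finite_subset by blast
  ultimately show ?thesis
    unfolding hweight_def by (simp add: card_Un_disjoint disjoint_iff)
qed

lemma column_flip_half:
  fixes W :: "nat \<Rightarrow> nat \<Rightarrow> bool"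
  assumes "j < N"
  defines "S \<equiv> {p. p < N \<and> W p j}"
  shows "\<exists>y \<in> {x, x(j := \<not> x j)}. (\<forall>p. p \<notin> S \<longrightarrow> mulv N W y p = mulv N W x p) \<and>
    card S - card S div 2 \<le> card {p \<in> S. mulv N W y p}"
proof (cases "card S - card S div 2 \<le> card {p \<in> S. mulv N W x p}")
  case True
  then show ?thesis by blast
next
  case False
  let ?y = "x(j := \<not> x j)" and ?A = "{p \<in> S. mulv N W x p}"
  have flip: "mulv N W ?y p \<longleftrightarrow> mulv N W x p \<noteq> (p \<in> S)" for p
    using mulv_flip[OF assms(1)] by (simp add: S_def)
  then have "{p \<in> S. mulv N W ?y p} = S - ?A" by auto
  moreover have "card (S - ?A) = card S - card ?A"
    by (rule card_Diff_subset) (auto simp: S_def)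
  moreover have "card S - card S div 2 \<le> card S - card ?A"
    using False by presburger
  ultimately show ?thesis
    using flip by auto
qed

lemma mu_add_half_column_le_MW:
  assumes W: "W \<in> Aset N m" and "j < N" and "vdeg N W j < N"
  defines "d \<equiv> vdeg N W j"
  shows "mu (N - d) m + (d - d div 2) \<le> MW N W (\<lambda>_. False)"
proof -
  define S where "S = {p. p < N \<and> W p j}"
  have "S \<subseteq> {..<N}" by (auto simp: S_def)
  have "card S = d" by (simp add: S_def d_def vdeg_def)
  then have "card ({..<N} - S) = N - d"
    using \<open>S \<subseteq> {..<N}\<close> by (simp add: card_Diff_subset finite_subset)
  moreover have "N - d \<ge> 1" using assms(3) by (simp add: d_def)
  ultimately obtain x where "x \<in> vecs N"
    and mu_le_T: "mu (N - d) m \<le> card {p \<in> {..<N} - S. mulv N W x p}"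
    using mu_le_weight_on_subset[OF W, of "{..<N} - S"] by blast
  obtain y where y: "y \<in> {x, x(j := \<not> x j)}"
    and outside: "\<forall>p. p \<notin> S \<longrightarrow> mulv N W y p = mulv N W x p"
    and half: "d - d div 2 \<le> card {p \<in> S. mulv N W y p}"
    using column_flip_half[where W = W and x = x] \<open>j < N\<close> \<open>card S = d\<close> by (auto simp: S_def)
  have "y \<in> vecs N"
    using y \<open>x \<in> vecs N\<close> \<open>j < N\<close> by (auto simp: vecs_def)
  have "mu (N - d) m + (d - d div 2) \<le>
      card {p \<in> {..<N} - S. mulv N W x p} + card {p \<in> S. mulv N W y p}"
    using mu_le_T half by (rule add_mono)
  also have "{p \<in> {..<N} - S. mulv N W x p} = {p \<in> {..<N} - S. mulv N W y p}"
    using outside by auto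
  also have "card \<dots> + card {p \<in> S. mulv N W y p} = hweight N (mulv N W y)"
    by (rule hweight_split[OF \<open>S \<subseteq> {..<N}\<close>, symmetric])
  also have "\<dots> \<le> MW N W (\<lambda>_. False)"
    using MW_ge[OF \<open>y \<in> vecs N\<close>, of W "\<lambda>_. False"] by simp
  finally show ?thesis .
qed

lemma optimal_wiring_with_full_column:
  assumes "N \<ge> 1" "m \<ge> 2" "mu N m \<noteq> mu N (m - 1)"
  obtains W j where "W \<in> Aset N m" "mu N m = MW N W (\<lambda>_. False)" "j < N" "vdeg N W j = m"
proof -
  have "m \<ge> 1" using assms(2) by simp
  then obtain W where W: "W \<in> Aset N m" and opt: "mu N m = MW N W (\<lambda>_. False)"
    using mu_attained[OF assms(1)] by blast
  have "\<exists>j<N. vdeg N W j = m"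
  proof (rule ccontr)
    assume "\<not> ?thesis"
    then have "\<forall>j<N. vdeg N W j \<le> m - 1"
      using W assms(1) by (fastforce simp: Aset_iff)
    then have "W \<in> Aset N (m - 1)"
      using W assms(1) by (simp add: Aset_iff)
    then have "mu N (m - 1) \<le> mu N m"
      using mu_le opt by simp
    moreover have "mu N m \<le> mu N (m - 1)"
      using mu_antimono assms(1,2) by simp
    ultimately show False using assms(3) by simp
  qed
  then show thesis using that W opt by blast
qed

theorem lemma5p1:
  fixes n m :: nat
  assumes "m \<ge> 2" and "n \<ge> 1"
  shows "mu (n + m) m = mu (n + m) (m - 1) \<or>
         (mu (n + m) m \<ge> mu n m + nu m m \<and>
          int (mu n m + nu m m) = int (mu n m) + \<lceil>real m / 2\<rceil>)"
proof (cases "mu (n + m) m = mu (n + m) (m - 1)")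
  case False
  have "n + m \<ge> 1" using assms(2) by simp
  then obtain W j where W: "W \<in> Aset (n + m) m" "mu (n + m) m = MW (n + m) W (\<lambda>_. False)"
    and j: "j < n + m" "vdeg (n + m) W j = m"
    using optimal_wiring_with_full_column assms(1) False by blast
  have nu: "nu m m = m - m div 2"
    by (rule nu_eq_half) (use assms(1) in simp_all)
  have "vdeg (n + m) W j < n + m" using j(2) assms(2) by simp
  then have "mu (n + m - m) m + (m - m div 2) \<le> mu (n + m) m"
    using mu_add_half_column_le_MW[OF W(1) j(1)] unfolding j(2) W(2) by blast
  then have "mu n m + nu m m \<le> mu (n + m) m"
    by (simp only: nu add_diff_cancel_right')
  moreover have "int (mu n m + nu m m) = int (mu n m) + \<lceil>real m / 2\<rceil>"
    by (simp only: of_nat_add nu ceiling_half)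
  ultimately show ?thesis by blast
qed simp

end
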